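(* Use the setting of the context, let $\rho>0$, and for $\star\in\{\rm d,i\}$ let $\Lambda^\star=\max_{\boldsymbol w\in\mathrm{range}(\boldsymbol I_T\otimes\boldsymbol\Pi^\star),\,\boldsymbol w\ne\boldsymbol 0}\boldsymbol w^{\mathsf H}\boldsymbol\Xi\boldsymbol w/\|\boldsymbol w\|^2$ (assuming $\boldsymbol\Pi^\star\neq\boldsymbol 0$). Then: (a) If $\Lambda^{\rm d}\ge\rho$, then $\boldsymbol U^{\mathsf H}\boldsymbol s_0^*\neq\boldsymbol 0$. (b) If $\Lambda^{\rm i}\ge\rho$, then $\boldsymbol U^{\mathsf H}\boldsymbol s_q^*\neq\boldsymbol 0$ for at least one $q\in\{1,\dots,Q\}$. (c) If $\mathrm{rank}(\boldsymbol U)=N_t$, $b_0>0$, $\boldsymbol g_0^{\mathsf H}\boldsymbol\Pi^{\rm d}\boldsymbol g_0>0$, and $$\lambda_{\min}(\boldsymbol U\boldsymbol U^{\mathsf H})\ge\frac{\rho\,\sigma_z^2/N_t}{b_0\,\boldsymbol g_0^{\mathsf H}\boldsymbol\Pi^{\rm d}\boldsymbol g_0},$$ then $\Lambda^{\rm d}\ge\rho$. (d) If $\mathrm{rank}(\boldsymbol U)=N_t$, $Q\ge1$, $\max_{1\le q\le Q}\sigma_q^2\boldsymbol g_q^{\mathsf H}\boldsymbol\Pi^{\rm i}\boldsymbol g_q>0$, and $$\lambda_{\min}(\boldsymbol U\boldsymbol U^{\mathsf H})\ge\frac{\rho\,\sigma_z^2/N_t}{\max_{1\le q\le Q}\sigma_q^2\,\boldsymbol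 g_q^{\mathsf H}\boldsymbol\Pi^{\rm i}\boldsymbol g_q},$$ then $\Lambda^{\rm i}\ge\rho$.
   Context: Let $T,N_t,N_m\ge1$, $Q\ge0$ be integers. Let $\boldsymbol g_0,\dots,\boldsymbol g_Q\in\mathbb{C}^{N_m}$ and $\boldsymbol s_0,\dots,\boldsymbol s_Q\in\mathbb{C}^{N_t}$ be steering vectors all of whose entries have unit magnitude (so $\|\boldsymbol s_q\|^2=N_t$). Let $\boldsymbol U\in\mathbb{C}^{N_t\times T}$ be the transmit code matrix and $\boldsymbol u=\mathrm{vec}(\boldsymbol U)$ (columns stacked). Let $\boldsymbol G_q=\boldsymbol I_T\otimes\boldsymbol g_q\boldsymbol s_q^{\mathsf T}$, let $b_0\ge0$ (direct-path power $|\beta_0|^2$), $\sigma_1^2,\dots,\sigma_Q^2>0$ (indirect-path powers), $\sigma_z^2>0$ (noise variance), and $\boldsymbol\Xi=\frac{b_0}{\sigma_z^2}\boldsymbol G_0\boldsymbol u\boldsymbol u^{\mathsf H}\boldsymbol G_0^{\mathsf H}+\sum_{q=1}^Q\frac{\sigma_q^2}{\sigma_z^2}\boldsymbol G_q\boldsymbol u\boldsymbol u^{\mathsf H}\boldsymbol G_q^{\mathsf H}$. $\boldsymbol\Pi^{\rm d}$ is the orthogonal projector onto the orthogonal complement of $\mathrm{span}\{\boldsymbol g_1,\dots,\boldsymbol g_Q\}$ (or $\boldsymbol I_{N_m}$ if $Q=0$); $\boldsymbol\Pi^{\rm i}$ is the orthogonal projector onto the orthogonal complement of $\mathrm{span}\{\boldsymbol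 g_0\}$ if $b_0>0$ (or $\boldsymbol I_{N_m}$ if $b_0=0$). $\Lambda^{\rm d}$ (resp. $\Lambda^{\rm i}$) is the maximal user SNR achievable with a receive filter zero-forcing the indirect paths (resp. the direct path); the condition $\Lambda^\star\ge\rho$ is the user's SNR/error-rate constraint. $\boldsymbol s^*$ is the entrywise complex conjugate, $\lambda_{\min}$ the smallest eigenvalue. *)

theory Defs
  imports Complex_Main "Jordan_Normal_Form.Schur_Decomposition" "Jordan_Normal_Form.DL_Rank"
    "Jordan_Normal_Form.Char_Poly"
begin

definition kron :: "complex mat \<Rightarrow> complex mat \<Rightarrow> complex mat" where
  "kron A B = mat (dim_row A * dim_row B) (dim_col A * dim_col B)
     (\<lambda>(i,j). A $$ (i div dim_row B, j div dim_col B) * B $$ (i mod dim_row B, j mod dim_col B))"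

definition vec_stack :: "complex mat \<Rightarrow> complex vec" where
  "vec_stack U = vec (dim_row U * dim_col U) (\<lambda>i. U $$ (i mod dim_row U, i div dim_row U))"

definition Gmat :: "nat \<Rightarrow> complex vec \<Rightarrow> complex vec \<Rightarrow> complex mat" where
  "Gmat T g s = kron (1\<^sub>m T) (mat (dim_vec g) (dim_vec s) (\<lambda>(i,j). g $ i * s $ j))"

definition outer :: "complex vec \<Rightarrow> complex mat" where
  "outer v = mat (dim_vec v) (dim_vec v) (\<lambda>(i,j). v $ i * cnj (v $ j))"

definition mat_range :: "complex mat \<Rightarrow> complex vec set" where
  "mat_range A = {A *\<^sub>v x | x. x \<in> carrier_vec (dim_col A)}"

definition orth_compl :: "nat \<Rightarrow> complex vec set \<Rightarrow> complex vec set" where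
  "orth_compl n S = {y \<in> carrier_vec n. \<forall>v\<in>S. y \<bullet>c v = 0}"

definition orth_proj :: "nat \<Rightarrow> complex vec set \<Rightarrow> complex mat" where
  "orth_proj n V = (THE P. P \<in> carrier_mat n n \<and> P * P = P \<and> mat_adjoint P = P \<and> mat_range P = V)"

definition quad :: "complex mat \<Rightarrow> complex vec \<Rightarrow> complex" where
  "quad A w = (A *\<^sub>v w) \<bullet>c w"

definition Pi_d :: "nat \<Rightarrow> nat \<Rightarrow> (nat \<Rightarrow> complex vec) \<Rightarrow> complex mat" where
  "Pi_d Nm Q g = orth_proj Nm (orth_compl Nm (g ` {1..Q}))"

definition Pi_i :: "nat \<Rightarrow> real \<Rightarrow> (nat \<Rightarrow> complex vec) \<Rightarrow> complex mat" where
  "Pi_i Nm b0 g = (if b0 > 0 then orth_proj Nm (orth_compl Nm {g 0}) else 1\<^sub>m Nm)"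

definition Xi :: "nat \<Rightarrow> nat \<Rightarrow> (nat \<Rightarrow> complex vec) \<Rightarrow> (nat \<Rightarrow> complex vec) \<Rightarrow> complex mat
    \<Rightarrow> real \<Rightarrow> (nat \<Rightarrow> real) \<Rightarrow> real \<Rightarrow> complex mat" where
  "Xi T Q g s U b0 sigma2 sigmaz2 =
     (let u = vec_stack U; n = T * dim_vec (g 0) in
      mat n n (\<lambda>ij. complex_of_real (b0 / sigmaz2) * outer (Gmat T (g 0) (s 0) *\<^sub>v u) $$ ij
        + (\<Sum>q\<in>{1..Q}. complex_of_real (sigma2 q / sigmaz2) * outer (Gmat T (g q) (s q) *\<^sub>v u) $$ ij)))"

definition Lambda :: "nat \<Rightarrow> complex mat \<Rightarrow> complex mat \<Rightarrow> real" where
  "Lambda T P X = Sup {Re (quad X w) / Re (w \<bullet>c w) | w.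
       w \<in> mat_range (kron (1\<^sub>m T) P) \<and> w \<noteq> 0\<^sub>v (T * dim_row P)}"

definition lambda_min :: "complex mat \<Rightarrow> real" where
  "lambda_min A = Min {Re k | k. eigenvalue A k}"

end

theory Submission
  imports Defs "HOL-Analysis.Convex"
begin

text \<open>
  Parts (a) and (b): if the relevant gains \<open>U\<^sup>H s\<^sub>q\<^sup>*\<close> vanish, every path signal
  \<open>G\<^sub>q u\<close> is orthogonal to the range of \<open>I\<^sub>T \<otimes> \<Pi>\<close>, either because it is zero or because
  \<open>\<Pi>\<close> annihilates \<open>g\<^sub>q\<close>. So the quadratic form of \<open>\<Xi>\<close> vanishes there and
  \<open>\<Lambda> = 0 < \<rho>\<close>.

  Parts (c) and (d): filtering a path signal \<open>G\<^sub>q u\<close> by \<open>I\<^sub>T \<otimes> \<Pi>\<close> gives a vector \<open>w\<close>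
  with \<open>\<parallel>w\<parallel>\<^sup>2 = (g\<^sub>q\<^sup>H \<Pi> g\<^sub>q) \<parallel>U\<^sup>H s\<^sub>q\<^sup>*\<parallel>\<^sup>2\<close> and \<open>(G\<^sub>q u)\<^sup>H w = \<parallel>w\<parallel>\<^sup>2\<close>, so its
  Rayleigh quotient is at least \<open>(\<sigma>\<^sub>q\<^sup>2/\<sigma>\<^sub>z\<^sup>2) (g\<^sub>q\<^sup>H \<Pi> g\<^sub>q) \<parallel>U\<^sup>H s\<^sub>q\<^sup>*\<parallel>\<^sup>2\<close>. Finally
  \<open>\<parallel>U\<^sup>H s\<^sub>q\<^sup>*\<parallel>\<^sup>2 \<ge> \<lambda>\<^sub>m\<^sub>i\<^sub>n(U U\<^sup>H) \<parallel>s\<^sub>q\<parallel>\<^sup>2 = \<lambda>\<^sub>m\<^sub>i\<^sub>n(U U\<^sup>H) N\<^sub>t\<close>, because the infimum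
  of the Rayleigh quotient of a positive semidefinite Hermitian matrix is one of its eigenvalues.
\<close>

section \<open>Squared norms and Hermitian matrices\<close>

definition vec_sq_norm :: "complex vec \<Rightarrow> real" where
  "vec_sq_norm v = (\<Sum>i<dim_vec v. (cmod (v $ i))\<^sup>2)"

lemma vec_sq_norm_nonneg: "vec_sq_norm v \<ge> 0"
  unfolding vec_sq_norm_def by (simp add: sum_nonneg)

lemma vec_sq_norm_zero [simp]: "vec_sq_norm (0\<^sub>v n) = 0"
  unfolding vec_sq_norm_def by simp

lemma vec_sq_norm_smult: "vec_sq_norm (c \<cdot>\<^sub>v v) = (cmod c)\<^sup>2 * vec_sq_norm v"
  unfolding vec_sq_norm_def by (simp add: norm_mult power_mult_distrib sum_distrib_left)

lemma vec_sq_norm_conjugate_unimodular: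
  assumes "s \<in> carrier_vec n" "\<forall>i<n. cmod (s $ i) = 1"
  shows "vec_sq_norm (conjugate s) = real n"
  unfolding vec_sq_norm_def using assms by simp

lemma cscalar_prod_sum:
  "dim_vec v = dim_vec w \<Longrightarrow> v \<bullet>c w = (\<Sum>i<dim_vec w. v $ i * cnj (w $ i))"
  unfolding scalar_prod_def by (simp add: atLeast0LessThan)

lemma cscalar_prod_self: "v \<bullet>c v = of_real (vec_sq_norm v)"
  unfolding vec_sq_norm_def
  by (simp only: cscalar_prod_sum[OF refl] of_real_sum complex_norm_square)

lemma cscalar_prod_swap: "dim_vec v = dim_vec w \<Longrightarrow> w \<bullet>c v = cnj (v \<bullet>c w)"
  by (simp add: cscalar_prod_sum mult.commute)

lemma vec_sq_norm_pos: "x \<in> carrier_vec n \<Longrightarrow> x \<noteq> 0\<^sub>v n \<Longrightarrow> vec_sq_norm x > 0"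
  using conjugate_square_greater_0_vec[of x n] by (simp add: cscalar_prod_self less_complex_def)

lemma mult_mat_vec_index_sum:
  "i < dim_row A \<Longrightarrow> dim_vec x = dim_col A \<Longrightarrow> (A *\<^sub>v x) $ i = (\<Sum>j<dim_col A. A $$ (i,j) * x $ j)"
  by (simp add: scalar_prod_def row_def atLeast0LessThan)

lemma cscalar_prod_mult_mat_vec_sum:
  fixes H :: "complex mat"
  assumes "H \<in> carrier_mat n n" "u \<in> carrier_vec n" "w \<in> carrier_vec n"
  shows "(H *\<^sub>v u) \<bullet>c w = (\<Sum>i<n. \<Sum>j<n. H $$ (i,j) * u $ j * cnj (w $ i))"
proof -
  have "(H *\<^sub>v u) \<bullet>c w = (\<Sum>i<n. (\<Sum>j<n. H $$ (i,j) * u $ j) * cnj (w $ i))"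
    using assms by (simp add: cscalar_prod_sum mult_mat_vec_index_sum del: index_mult_mat_vec)
  then show ?thesis by (simp only: sum_distrib_right)
qed

lemma vec_eq_by_cscalar_prod:
  fixes v w :: "complex vec"
  assumes "v \<in> carrier_vec n" "w \<in> carrier_vec n" "\<And>y. y \<in> carrier_vec n \<Longrightarrow> v \<bullet>c y = w \<bullet>c y"
  shows "v = w"
proof (rule eq_vecI)
  fix i assume "i < dim_vec w"
  hence i: "i < n" using assms by auto
  have "v \<bullet>c conjugate (unit_vec n i) = w \<bullet>c conjugate (unit_vec n i)"
    using assms(3)[of "conjugate (unit_vec n i)"] by simp
  then show "v $ i = w $ i" using i by (simp add: scalar_prod_right_unit)
qed (use assms in auto)

lemma mult_mat_unit_vec_index:
  "(A :: complex mat) \<in> carrier_mat n m \<Longrightarrow> i < n \<Longrightarrow> j < m \<Longrightarrow> (A *\<^sub>v unit_vec m j) $ i = A $$ (i,j)"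
  using scalar_prod_right_unit[of j m "row A i"] by simp

lemma mat_eq_by_mult_vec:
  fixes A B :: "complex mat"
  assumes "A \<in> carrier_mat n m" "B \<in> carrier_mat n m" "\<And>x. x \<in> carrier_vec m \<Longrightarrow> A *\<^sub>v x = B *\<^sub>v x"
  shows "A = B"
proof (rule eq_matI)
  fix i j assume ij: "i < dim_row B" "j < dim_col B"
  hence "(A *\<^sub>v unit_vec m j) $ i = (B *\<^sub>v unit_vec m j) $ i" using assms by auto
  then show "A $$ (i,j) = B $$ (i,j)"
    using ij assms mult_mat_unit_vec_index[of A n m i j] mult_mat_unit_vec_index[of B n m i j] by simp
qed (use assms in auto)

lemma mat_adjoint_dims [simp]:
  "dim_row (mat_adjoint A) = dim_col A" "dim_col (mat_adjoint A) = dim_row A"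
  unfolding mat_adjoint_def by auto

lemma mat_adjoint_carrier [simp]: "U \<in> carrier_mat n m \<Longrightarrow> mat_adjoint U \<in> carrier_mat m n"
  by (metis mat_adjoint_dims carrier_matD carrier_matI)

lemma mat_adjoint_index [simp]:
  "i < dim_col A \<Longrightarrow> j < dim_row A \<Longrightarrow> mat_adjoint A $$ (i,j) = cnj (A $$ (j,i))"
  unfolding mat_adjoint_def by (simp add: mat_of_rows_def)

lemma hermitian_index:
  "P \<in> carrier_mat n n \<Longrightarrow> mat_adjoint P = P \<Longrightarrow> i < n \<Longrightarrow> j < n \<Longrightarrow> P $$ (i,j) = cnj (P $$ (j,i))"
  by (metis mat_adjoint_index carrier_matD)

lemma hermitianI:
  assumes "A \<in> carrier_mat n n" "\<And>i j. i < n \<Longrightarrow> j < n \<Longrightarrow> A $$ (i,j) = cnj (A $$ (j,i))"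
  shows "mat_adjoint A = A"
proof (rule eq_matI)
  fix i j assume "i < dim_row A" "j < dim_col A"
  then show "mat_adjoint A $$ (i,j) = A $$ (i,j)" using assms(1) assms(2)[of i j] by simp
qed (use assms(1) in auto)

lemma cscalar_prod_mat_adjoint:
  fixes U :: "complex mat"
  assumes U: "U \<in> carrier_mat n m" and x: "x \<in> carrier_vec m" and y: "y \<in> carrier_vec n"
  shows "(U *\<^sub>v x) \<bullet>c y = x \<bullet>c (mat_adjoint U *\<^sub>v y)"
proof -
  have "(U *\<^sub>v x) \<bullet>c y = (\<Sum>i<n. (\<Sum>j<m. U $$ (i,j) * x $ j) * cnj (y $ i))"
    using U x y by (simp add: cscalar_prod_sum mult_mat_vec_index_sum del: index_mult_mat_vec)
  also have "\<dots> = (\<Sum>i<n. \<Sum>j<m. x $ j * (U $$ (i,j) * cnj (y $ i)))"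
    by (simp add: sum_distrib_left mult.commute mult.left_commute)
  also have "\<dots> = (\<Sum>j<m. \<Sum>i<n. x $ j * (U $$ (i,j) * cnj (y $ i)))"
    by (rule sum.swap)
  also have "\<dots> = (\<Sum>j<m. x $ j * cnj (\<Sum>i<n. cnj (U $$ (i,j)) * y $ i))"
    unfolding sum_distrib_left cnj_sum by (intro sum.cong refl) simp
  also have "\<dots> = x \<bullet>c (mat_adjoint U *\<^sub>v y)"
    using U x y by (simp add: cscalar_prod_sum mult_mat_vec_index_sum del: index_mult_mat_vec)
  finally show ?thesis .
qed

lemma cscalar_prod_hermitian:
  fixes P :: "complex mat"
  assumes "P \<in> carrier_mat n n" "mat_adjoint P = P" "x \<in> carrier_vec n" "y \<in> carrier_vec n"
  shows "(P *\<^sub>v x) \<bullet>c y = x \<bullet>c (P *\<^sub>v y)"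
  using cscalar_prod_mat_adjoint[of P n n x y] assms by simp

section \<open>Orthogonal projectors\<close>

definition is_orth_proj :: "nat \<Rightarrow> complex mat \<Rightarrow> complex vec set \<Rightarrow> bool" where
  "is_orth_proj n P V \<longleftrightarrow> P \<in> carrier_mat n n \<and> P * P = P \<and> mat_adjoint P = P \<and> mat_range P = V"

lemma is_orth_projD:
  assumes "is_orth_proj n P V"
  shows "P \<in> carrier_mat n n" "P * P = P" "mat_adjoint P = P" "mat_range P = V"
  using assms unfolding is_orth_proj_def by auto

lemma is_orth_proj_mult_vec_mem:
  "is_orth_proj n P V \<Longrightarrow> x \<in> carrier_vec n \<Longrightarrow> P *\<^sub>v x \<in> V"
  unfolding is_orth_proj_def mat_range_def by auto

lemma is_orth_proj_carrier: "is_orth_proj n P V \<Longrightarrow> y \<in> V \<Longrightarrow> y \<in> carrier_vec n"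
  unfolding is_orth_proj_def mat_range_def by auto

lemma is_orth_proj_fix:
  assumes P: "is_orth_proj n P V" and y: "y \<in> V"
  shows "P *\<^sub>v y = y"
proof -
  from assms obtain x where x: "x \<in> carrier_vec n" "y = P *\<^sub>v x"
    unfolding is_orth_proj_def mat_range_def by auto
  have "(P * P) *\<^sub>v x = P *\<^sub>v (P *\<^sub>v x)"
    using is_orth_projD(1)[OF P] x by (intro assoc_mult_mat_vec) auto
  thus ?thesis using x is_orth_projD(2)[OF P] by simp
qed

lemma is_orth_projI:
  fixes P :: "complex mat"
  assumes P: "P \<in> carrier_mat n n" "mat_adjoint P = P"
    and into: "\<And>x. x \<in> carrier_vec n \<Longrightarrow> P *\<^sub>v x \<in> W"
    and fixed: "\<And>y. y \<in> W \<Longrightarrow> y \<in> carrier_vec n \<and> P *\<^sub>v y = y"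
  shows "is_orth_proj n P W"
proof -
  have "P * P = P"
  proof (rule mat_eq_by_mult_vec[of _ n n])
    fix x :: "complex vec" assume x: "x \<in> carrier_vec n"
    have "(P * P) *\<^sub>v x = P *\<^sub>v (P *\<^sub>v x)" by (rule assoc_mult_mat_vec[OF P(1) P(1) x])
    then show "(P * P) *\<^sub>v x = P *\<^sub>v x" using fixed into[OF x] by auto
  qed (use P in auto)
  moreover have "mat_range P = W"
  proof
    show "mat_range P \<subseteq> W" unfolding mat_range_def using P(1) into by auto
    show "W \<subseteq> mat_range P"
    proof
      fix y assume "y \<in> W"
      then have "y \<in> carrier_vec n" "y = P *\<^sub>v y" using fixed by auto
      then show "y \<in> mat_range P" unfolding mat_range_def using P(1) by auto
    qed
  qed
  ultimately show ?thesis unfolding is_orth_proj_def using P by blast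
qed

lemma is_orth_proj_one: "is_orth_proj n (1\<^sub>m n) (carrier_vec n)"
proof (rule is_orth_projI)
  show "mat_adjoint (1\<^sub>m n) = (1\<^sub>m n :: complex mat)" by (rule hermitianI[of _ n]) auto
qed auto

lemma is_orth_proj_unique:
  assumes P: "is_orth_proj n P V" and P': "is_orth_proj n P' V"
  shows "P = P'"
proof (rule mat_eq_by_mult_vec[OF is_orth_projD(1)[OF P] is_orth_projD(1)[OF P']])
  note Pc = is_orth_projD(1,3)[OF P] and P'c = is_orth_projD(1,3)[OF P']
  fix x :: "complex vec" assume x: "x \<in> carrier_vec n"
  show "P *\<^sub>v x = P' *\<^sub>v x"
  proof (rule vec_eq_by_cscalar_prod[of _ n])
    fix y :: "complex vec" assume y: "y \<in> carrier_vec n"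
    have "(P *\<^sub>v x) \<bullet>c y = (P' *\<^sub>v (P *\<^sub>v x)) \<bullet>c y"
      using is_orth_proj_fix[OF P' is_orth_proj_mult_vec_mem[OF P x]] by simp
    also have "\<dots> = x \<bullet>c (P *\<^sub>v (P' *\<^sub>v y))"
      using cscalar_prod_hermitian[OF P'c _ y, of "P *\<^sub>v x"]
        cscalar_prod_hermitian[OF Pc x, of "P' *\<^sub>v y"] Pc P'c x y by simp
    also have "\<dots> = (P' *\<^sub>v x) \<bullet>c y"
      using is_orth_proj_fix[OF P is_orth_proj_mult_vec_mem[OF P' y]]
        cscalar_prod_hermitian[OF P'c x y] by simp
    finally show "(P *\<^sub>v x) \<bullet>c y = (P' *\<^sub>v x) \<bullet>c y" .
  qed (use x Pc P'c in auto)
qed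

lemma mult_mat_vec_minus_outer:
  fixes P :: "complex mat"
  assumes P: "P \<in> carrier_mat n n" and r: "r \<in> carrier_vec n" and x: "x \<in> carrier_vec n"
  shows "(P - c \<cdot>\<^sub>m outer r) *\<^sub>v x = P *\<^sub>v x - (c * (x \<bullet>c r)) \<cdot>\<^sub>v r"
proof (rule eq_vecI)
  fix i assume "i < dim_vec (P *\<^sub>v x - (c * (x \<bullet>c r)) \<cdot>\<^sub>v r)"
  hence i: "i < n" using r by auto
  have "((P - c \<cdot>\<^sub>m outer r) *\<^sub>v x) $ i = (\<Sum>j<n. (P $$ (i,j) - c * (r $ i * cnj (r $ j))) * x $ j)"
    using P r x i by (simp add: mult_mat_vec_index_sum outer_def del: index_mult_mat_vec)
  also have "\<dots> = (\<Sum>j<n. P $$ (i,j) * x $ j) - c * (\<Sum>j<n. x $ j * cnj (r $ j)) * r $ i"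
    by (simp add: algebra_simps sum_subtractf sum_distrib_left sum_distrib_right)
  also have "\<dots> = (P *\<^sub>v x - (c * (x \<bullet>c r)) \<cdot>\<^sub>v r) $ i"
    using P x r i by (simp add: mult_mat_vec_index_sum cscalar_prod_sum del: index_mult_mat_vec)
  finally show "((P - c \<cdot>\<^sub>m outer r) *\<^sub>v x) $ i = (P *\<^sub>v x - (c * (x \<bullet>c r)) \<cdot>\<^sub>v r) $ i" .
qed (use P r in \<open>auto simp: outer_def\<close>)

lemma hermitian_minus_outer:
  fixes P :: "complex mat"
  assumes P: "P \<in> carrier_mat n n" "mat_adjoint P = P" and r: "r \<in> carrier_vec n"
  shows "mat_adjoint (P - complex_of_real c \<cdot>\<^sub>m outer r) = P - complex_of_real c \<cdot>\<^sub>m outer r"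
proof (rule hermitianI[of _ n])
  fix i j assume "i < n" "j < n"
  then show "(P - complex_of_real c \<cdot>\<^sub>m outer r) $$ (i,j) = cnj ((P - complex_of_real c \<cdot>\<^sub>m outer r) $$ (j,i))"
    unfolding outer_def using P r hermitian_index[OF P, of i j] by simp
qed (use P r in \<open>auto simp: outer_def\<close>)

lemma is_orth_proj_minus_outer:
  assumes P: "is_orth_proj n P V" and r: "r \<in> V" "r \<noteq> 0\<^sub>v n"
  defines "P' \<equiv> P - complex_of_real (1 / vec_sq_norm r) \<cdot>\<^sub>m outer r"
  shows "is_orth_proj n P' {y \<in> V. y \<bullet>c r = 0}"
proof -
  note Pc = is_orth_projD[OF P]
  have rc: "r \<in> carrier_vec n" by (rule is_orth_proj_carrier[OF P r(1)])
  have Pr: "P *\<^sub>v r = r" by (rule is_orth_proj_fix[OF P r(1)])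
  have P'c: "P' \<in> carrier_mat n n" unfolding P'_def outer_def using Pc rc by auto
  have herm: "mat_adjoint P' = P'" unfolding P'_def by (rule hermitian_minus_outer[OF Pc(1,3) rc])
  have P'x: "P' *\<^sub>v x = P *\<^sub>v x - (complex_of_real (1 / vec_sq_norm r) * (x \<bullet>c r)) \<cdot>\<^sub>v r"
    if "x \<in> carrier_vec n" for x
    unfolding P'_def by (rule mult_mat_vec_minus_outer[OF Pc(1) rc that])
  have P'r: "P' *\<^sub>v r = 0\<^sub>v n"
    using P'x[OF rc] Pr rc vec_sq_norm_pos[OF rc r(2)] by (auto simp: cscalar_prod_self)
  show ?thesis
  proof (rule is_orth_projI[OF P'c herm])
    fix x :: "complex vec" assume x: "x \<in> carrier_vec n"
    define a where "a = complex_of_real (1 / vec_sq_norm r) * (x \<bullet>c r)"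
    have "P' *\<^sub>v x = P *\<^sub>v x - a \<cdot>\<^sub>v (P *\<^sub>v r)" using P'x[OF x] Pr unfolding a_def by simp
    also have "\<dots> = P *\<^sub>v (x - a \<cdot>\<^sub>v r)" using Pc x rc
      by (simp add: mult_minus_distrib_mat_vec mult_mat_vec)
    finally have "P' *\<^sub>v x \<in> V" using is_orth_proj_mult_vec_mem[OF P] x rc by simp
    moreover have "(P' *\<^sub>v x) \<bullet>c r = 0"
      using cscalar_prod_hermitian[OF P'c herm x rc] P'r x by simp
    ultimately show "P' *\<^sub>v x \<in> {y \<in> V. y \<bullet>c r = 0}" by simp
  next
    fix y assume y: "y \<in> {y \<in> V. y \<bullet>c r = 0}"
    then have yc: "y \<in> carrier_vec n" using is_orth_proj_carrier[OF P] by blast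
    then show "y \<in> carrier_vec n \<and> P' *\<^sub>v y = y"
      using P'x[OF yc] y is_orth_proj_fix[OF P] rc by auto
  qed
qed

lemma orth_compl_insert: "orth_compl n (insert v S) = {y \<in> orth_compl n S. y \<bullet>c v = 0}"
  unfolding orth_compl_def by auto

lemma is_orth_proj_orth_compl_exists:
  "set vs \<subseteq> carrier_vec n \<Longrightarrow> \<exists>P. is_orth_proj n P (orth_compl n (set vs))"
proof (induction vs)
  case Nil
  have "orth_compl n {} = carrier_vec n" unfolding orth_compl_def by auto
  then show ?case using is_orth_proj_one by auto
next
  case (Cons v vs)
  define V where "V = orth_compl n (set vs)"
  obtain P where P: "is_orth_proj n P V" and v: "v \<in> carrier_vec n"
    using Cons unfolding V_def by auto
  define r where "r = P *\<^sub>v v"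
  have r: "r \<in> V" unfolding r_def by (rule is_orth_proj_mult_vec_mem[OF P v])
  have "y \<bullet>c v = y \<bullet>c r" if "y \<in> V" for y
    using cscalar_prod_hermitian[OF is_orth_projD(1,3)[OF P] is_orth_proj_carrier[OF P that] v]
      is_orth_proj_fix[OF P that] unfolding r_def by simp
  then have V': "orth_compl n (set (v # vs)) = {y \<in> V. y \<bullet>c r = 0}"
    unfolding V_def by (auto simp: orth_compl_insert)
  show ?case
  proof (cases "r = 0\<^sub>v n")
    case True
    then have "orth_compl n (set (v # vs)) = V"
      unfolding V' using is_orth_proj_carrier[OF P] by auto
    then show ?thesis using P by auto
  next
    case False
    then show ?thesis unfolding V' using is_orth_proj_minus_outer[OF P r] by blast
  qed
qed

lemma is_orth_proj_orth_proj:
  assumes "finite S" "S \<subseteq> carrier_vec n"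
  shows "is_orth_proj n (orth_proj n (orth_compl n S)) (orth_compl n S)"
proof -
  obtain vs where vs: "set vs = S" using finite_list[OF assms(1)] by auto
  obtain P where P: "is_orth_proj n P (orth_compl n S)"
    using is_orth_proj_orth_compl_exists[of vs n] vs assms by auto
  have "orth_proj n (orth_compl n S) = (THE P. is_orth_proj n P (orth_compl n S))"
    unfolding orth_proj_def is_orth_proj_def by simp
  then show ?thesis using theI[of "\<lambda>P. is_orth_proj n P (orth_compl n S)", OF P]
      is_orth_proj_unique[OF _ P] by metis
qed

section \<open>Cauchy--Schwarz and the smallest eigenvalue\<close>

lemma quadratic_nonneg_imp_discriminant_le:
  fixes a b c :: real
  assumes b: "b \<ge> 0" and nonneg: "\<And>t. 0 \<le> a + 2 * t * c + t\<^sup>2 * b"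
  shows "c\<^sup>2 \<le> a * b"
proof (cases "b = 0")
  case True
  show ?thesis
  proof (cases "c = 0")
    case True
    then show ?thesis using nonneg[of 0] \<open>b = 0\<close> by simp
  next
    case False
    have "0 \<le> a + 2 * (- (a + 1) / (2 * c)) * c" using nonneg[of "- (a + 1) / (2 * c)"] \<open>b = 0\<close> by simp
    also have "\<dots> = -1" using False by (simp add: field_simps)
    finally show ?thesis by simp
  qed
next
  case False
  hence bp: "b > 0" using b by simp
  have "0 \<le> a + 2 * (- c / b) * c + (- c / b)\<^sup>2 * b" by (rule nonneg)
  also have "\<dots> = a - c\<^sup>2 / b" using bp by (simp add: field_simps power2_eq_square)
  finally show ?thesis using bp by (simp add: field_simps mult.commute)
qed

lemma cmod_sum_mult_sq_le:
  fixes a b :: "nat \<Rightarrow> complex"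
  shows "(cmod (\<Sum>i\<in>I. a i * b i))\<^sup>2 \<le> (\<Sum>i\<in>I. (cmod (a i))\<^sup>2) * (\<Sum>i\<in>I. (cmod (b i))\<^sup>2)"
proof -
  have "cmod (\<Sum>i\<in>I. a i * b i) \<le> (\<Sum>i\<in>I. cmod (a i) * cmod (b i))"
    using norm_sum[of "\<lambda>i. a i * b i" I] by (simp add: norm_mult)
  hence "(cmod (\<Sum>i\<in>I. a i * b i))\<^sup>2 \<le> (\<Sum>i\<in>I. cmod (a i) * cmod (b i))\<^sup>2"
    by (rule power_mono) simp
  also have "\<dots> \<le> (\<Sum>i\<in>I. (cmod (a i))\<^sup>2) * (\<Sum>i\<in>I. (cmod (b i))\<^sup>2)"
    by (rule Cauchy_Schwarz_ineq_sum)
  finally show ?thesis .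
qed

lemma cscalar_prod_Cauchy_Schwarz:
  "dim_vec v = dim_vec w \<Longrightarrow> (cmod (v \<bullet>c w))\<^sup>2 \<le> vec_sq_norm v * vec_sq_norm w"
  unfolding vec_sq_norm_def using cmod_sum_mult_sq_le[of "\<lambda>i. v $ i" "\<lambda>i. cnj (w $ i)" "{..<dim_vec w}"]
  by (simp add: cscalar_prod_sum)

definition frob_sq_norm :: "complex mat \<Rightarrow> real" where
  "frob_sq_norm A = (\<Sum>i<dim_row A. \<Sum>j<dim_col A. (cmod (A $$ (i,j)))\<^sup>2)"

lemma frob_sq_norm_nonneg: "frob_sq_norm A \<ge> 0"
  unfolding frob_sq_norm_def by (simp add: sum_nonneg)

lemma vec_sq_norm_mult_mat_vec_le:
  assumes "dim_vec x = dim_col A"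
  shows "vec_sq_norm (A *\<^sub>v x) \<le> frob_sq_norm A * vec_sq_norm x"
proof -
  have "vec_sq_norm (A *\<^sub>v x) = (\<Sum>i<dim_row A. (cmod (\<Sum>j<dim_col A. A $$ (i,j) * x $ j))\<^sup>2)"
    unfolding vec_sq_norm_def using assms by (simp add: mult_mat_vec_index_sum del: index_mult_mat_vec)
  also have "\<dots> \<le> (\<Sum>i<dim_row A. (\<Sum>j<dim_col A. (cmod (A $$ (i,j)))\<^sup>2) * vec_sq_norm x)"
    using cmod_sum_mult_sq_le[of "\<lambda>j. A $$ (_, j)" "\<lambda>j. x $ j" "{..<dim_col A}"] assms
    unfolding vec_sq_norm_def by (intro sum_mono) simp
  also have "\<dots> = frob_sq_norm A * vec_sq_norm x"
    unfolding frob_sq_norm_def by (simp add: sum_distrib_right)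
  finally show ?thesis .
qed

lemma Re_quad_le_frob_sq_norm:
  assumes "H \<in> carrier_mat n n" "z \<in> carrier_vec n"
  shows "Re (quad H z) \<le> sqrt (frob_sq_norm H) * vec_sq_norm z"
proof -
  have "(cmod (quad H z))\<^sup>2 \<le> vec_sq_norm (H *\<^sub>v z) * vec_sq_norm z"
    unfolding quad_def by (rule cscalar_prod_Cauchy_Schwarz) (use assms in simp)
  also have "\<dots> \<le> (frob_sq_norm H * vec_sq_norm z) * vec_sq_norm z"
    by (rule mult_right_mono[OF vec_sq_norm_mult_mat_vec_le vec_sq_norm_nonneg]) (use assms in simp)
  also have "\<dots> = (sqrt (frob_sq_norm H) * vec_sq_norm z)\<^sup>2"
    using frob_sq_norm_nonneg[of H] by (simp add: power2_eq_square power_mult_distrib)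
  finally have "cmod (quad H z) \<le> sqrt (frob_sq_norm H) * vec_sq_norm z"
    by (rule power2_le_imp_le) (use vec_sq_norm_nonneg[of z] frob_sq_norm_nonneg[of H] in simp)
  then show ?thesis using complex_Re_le_cmod[of "quad H z"] by linarith
qed

lemma Re_quad_add_smult:
  fixes H :: "complex mat"
  assumes H: "H \<in> carrier_mat n n" "mat_adjoint H = H"
    and x: "x \<in> carrier_vec n" and y: "y \<in> carrier_vec n"
  shows "Re (quad H (x + complex_of_real t \<cdot>\<^sub>v y)) =
    Re (quad H x) + 2 * t * Re ((H *\<^sub>v x) \<bullet>c y) + t\<^sup>2 * Re (quad H y)"
proof -
  let ?t = "complex_of_real t"
  have "conjugate (x + ?t \<cdot>\<^sub>v y) = conjugate x + ?t \<cdot>\<^sub>v conjugate y"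
    using x y by (simp add: conjugate_add_vec[of _ n] conjugate_smult_vec)
  then have "quad H (x + ?t \<cdot>\<^sub>v y) =
      quad H x + ?t * ((H *\<^sub>v y) \<bullet>c x) + ?t * ((H *\<^sub>v x) \<bullet>c y) + ?t\<^sup>2 * quad H y"
    using H(1) x y unfolding quad_def
    by (simp add: mult_add_distrib_mat_vec mult_mat_vec add_scalar_prod_distrib[of _ n]
        scalar_prod_add_distrib[of _ n] power2_eq_square algebra_simps)
  moreover have "(H *\<^sub>v y) \<bullet>c x = cnj ((H *\<^sub>v x) \<bullet>c y)"
    using cscalar_prod_hermitian[OF H y x] cscalar_prod_swap[of "H *\<^sub>v x" y] H x y by simp
  ultimately show ?thesis by (simp add: power2_eq_square)
qed

text \<open>Cauchy--Schwarz for the semi-inner product \<open>(x, y) \<mapsto> (H x) \<bullet>c y\<close>, applied to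
  \<open>x\<close> and \<open>H x\<close>.\<close>

lemma hermitian_psd_sq_norm_mult_vec_le:
  fixes H :: "complex mat"
  assumes H: "H \<in> carrier_mat n n" "mat_adjoint H = H"
    and psd: "\<And>x. x \<in> carrier_vec n \<Longrightarrow> 0 \<le> Re (quad H x)"
    and x: "x \<in> carrier_vec n"
  shows "vec_sq_norm (H *\<^sub>v x) \<le> sqrt (frob_sq_norm H) * Re (quad H x)"
proof -
  let ?a = "Re (quad H x)" and ?c = "vec_sq_norm (H *\<^sub>v x)" and ?b = "Re (quad H (H *\<^sub>v x))"
  have Hx: "H *\<^sub>v x \<in> carrier_vec n" using H x by simp
  have "?c\<^sup>2 \<le> ?a * ?b"
  proof (rule quadratic_nonneg_imp_discriminant_le)
    show "0 \<le> ?b" by (rule psd[OF Hx])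
    fix t
    have "0 \<le> Re (quad H (x + complex_of_real t \<cdot>\<^sub>v (H *\<^sub>v x)))" by (rule psd) (use x Hx in simp)
    then show "0 \<le> ?a + 2 * t * ?c + t\<^sup>2 * ?b"
      by (simp add: Re_quad_add_smult[OF H x Hx] cscalar_prod_self)
  qed
  also have "\<dots> \<le> ?a * (sqrt (frob_sq_norm H) * ?c)"
    by (rule mult_left_mono[OF Re_quad_le_frob_sq_norm[OF H(1) Hx] psd[OF x]])
  finally have "?c * ?c \<le> (?a * sqrt (frob_sq_norm H)) * ?c"
    by (simp add: power2_eq_square mult_ac)
  then show ?thesis
    using vec_sq_norm_nonneg[of "H *\<^sub>v x"] psd[OF x] frob_sq_norm_nonneg[of H]
    by (cases "?c = 0") (auto simp: mult.commute)
qed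

lemma hermitian_psd_coercive:
  fixes H :: "complex mat"
  assumes H: "H \<in> carrier_mat n n" "mat_adjoint H = H"
    and psd: "\<And>x. x \<in> carrier_vec n \<Longrightarrow> 0 \<le> Re (quad H x)"
    and det: "det H \<noteq> 0"
  obtains C where "C > 0" "\<And>x. x \<in> carrier_vec n \<Longrightarrow> vec_sq_norm x \<le> C * Re (quad H x)"
proof -
  obtain B where B: "B \<in> carrier_mat n n" "B * H = 1\<^sub>m n"
    using det_non_zero_imp_unit[OF H(1) det, of "()"] unfolding Units_def ring_mat_def by auto
  define C where "C = frob_sq_norm B * sqrt (frob_sq_norm H) + 1"
  have "C > 0" unfolding C_def using frob_sq_norm_nonneg[of B] frob_sq_norm_nonneg[of H]
    by (simp add: add_nonneg_pos)
  moreover have "vec_sq_norm x \<le> C * Re (quad H x)" if x: "x \<in> carrier_vec n" for x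
  proof -
    have "x = B *\<^sub>v (H *\<^sub>v x)" using assoc_mult_mat_vec[OF B(1) H(1) x] B(2) x by simp
    then have "vec_sq_norm x \<le> frob_sq_norm B * vec_sq_norm (H *\<^sub>v x)"
      using vec_sq_norm_mult_mat_vec_le[of "H *\<^sub>v x" B] B H x by simp
    also have "\<dots> \<le> frob_sq_norm B * (sqrt (frob_sq_norm H) * Re (quad H x))"
      by (rule mult_left_mono[OF hermitian_psd_sq_norm_mult_vec_le[OF H psd x] frob_sq_norm_nonneg])
    also have "\<dots> \<le> C * Re (quad H x)" unfolding C_def using psd[OF x]
      by (simp add: distrib_right mult.assoc)
    finally show ?thesis .
  qed
  ultimately show ?thesis using that by blast
qed

lemma char_matrix_mult_vec:
  fixes A :: "complex mat"
  assumes "A \<in> carrier_mat n n" "x \<in> carrier_vec n"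
  shows "char_matrix A e *\<^sub>v x = A *\<^sub>v x - e \<cdot>\<^sub>v x"
proof -
  have "char_matrix A e *\<^sub>v x = A *\<^sub>v x + (- e) \<cdot>\<^sub>v x"
    by (rule eq_vecI) (use assms in \<open>auto simp: char_matrix_def add_scalar_prod_distrib[of _ n]\<close>)
  then show ?thesis using assms by (auto simp: minus_add_uminus_vec[of _ n])
qed

lemma char_matrix_hermitian:
  assumes "A \<in> carrier_mat n n" "mat_adjoint A = A"
  shows "mat_adjoint (char_matrix A (complex_of_real \<mu>)) = char_matrix A (complex_of_real \<mu>)"
proof (rule hermitianI[of _ n])
  fix i j assume "i < n" "j < n"
  then show "char_matrix A (complex_of_real \<mu>) $$ (i,j) = cnj (char_matrix A (complex_of_real \<mu>) $$ (j,i))"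
    using assms(1) hermitian_index[OF assms, of i j] by (simp add: char_matrix_def)
qed (use assms in simp)

text \<open>If \<open>\<mu>\<close> were no eigenvalue, \<open>char_matrix A \<mu>\<close> would be invertible, hence coercive,
  and the Rayleigh quotient would stay a fixed distance above \<open>\<mu>\<close>.\<close>

lemma Rayleigh_inf_eigenvalue:
  fixes A :: "complex mat"
  assumes A: "A \<in> carrier_mat n n" "mat_adjoint A = A"
    and lower: "\<And>x. x \<in> carrier_vec n \<Longrightarrow> \<mu> * vec_sq_norm x \<le> Re (quad A x)"
    and approx: "\<And>\<epsilon>. \<epsilon> > 0 \<Longrightarrow>
      \<exists>x\<in>carrier_vec n. x \<noteq> 0\<^sub>v n \<and> Re (quad A x) < (\<mu> + \<epsilon>) * vec_sq_norm x"
  shows "eigenvalue A (complex_of_real \<mu>)"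
proof (rule ccontr)
  assume no_ev: "\<not> eigenvalue A (complex_of_real \<mu>)"
  define H where "H = char_matrix A (complex_of_real \<mu>)"
  have Hc: "H \<in> carrier_mat n n" unfolding H_def using A(1) by simp
  have quad_H: "Re (quad H x) = Re (quad A x) - \<mu> * vec_sq_norm x" if x: "x \<in> carrier_vec n" for x
    using A(1) x unfolding H_def quad_def
    by (simp add: char_matrix_mult_vec minus_scalar_prod_distrib[of _ n] cscalar_prod_self)
  have H_psd: "0 \<le> Re (quad H x)" if "x \<in> carrier_vec n" for x
    using quad_H[OF that] lower[OF that] by simp
  have "det H \<noteq> 0" using no_ev eigenvalue_det[OF A(1)] unfolding H_def by simp
  then obtain C where C: "C > 0" "\<And>x. x \<in> carrier_vec n \<Longrightarrow> vec_sq_norm x \<le> C * Re (quad H x)"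
    using hermitian_psd_coercive[OF Hc char_matrix_hermitian[OF A, of \<mu>, folded H_def] H_psd] by blast
  obtain x where x: "x \<in> carrier_vec n" "x \<noteq> 0\<^sub>v n"
    and less: "Re (quad A x) < (\<mu> + 1 / (2 * C)) * vec_sq_norm x"
    using approx[of "1 / (2 * C)"] C(1) by auto
  have "Re (quad H x) < vec_sq_norm x / (2 * C)"
    using less unfolding quad_H[OF x(1)] by (simp add: algebra_simps)
  then have "C * Re (quad H x) < vec_sq_norm x / 2" using C(1) by (simp add: field_simps)
  then show False using C(2)[OF x(1)] vec_sq_norm_pos[OF x] by simp
qed

lemma hermitian_psd_min_eigenvalue_exists:
  fixes A :: "complex mat"
  assumes A: "A \<in> carrier_mat n n" "mat_adjoint A = A" and n: "n > 0"
    and psd: "\<And>x. x \<in> carrier_vec n \<Longrightarrow> 0 \<le> Re (quad A x)"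
  obtains \<mu> where "eigenvalue A (complex_of_real \<mu>)"
    "\<And>x. x \<in> carrier_vec n \<Longrightarrow> \<mu> * vec_sq_norm x \<le> Re (quad A x)"
proof -
  define S where "S = {Re (quad A x) / vec_sq_norm x | x. x \<in> carrier_vec n \<and> x \<noteq> 0\<^sub>v n}"
  have "unit_vec n 0 $ 0 = (1 :: complex)" using n by simp
  then have "unit_vec n 0 \<in> carrier_vec n \<and> unit_vec n 0 \<noteq> 0\<^sub>v n"
    using n by auto
  then have S_ne: "S \<noteq> {}" unfolding S_def by blast
  have S_bdd: "bdd_below S"
    unfolding S_def using psd vec_sq_norm_nonneg by (auto intro!: bdd_belowI[of _ 0])
  define \<mu> where "\<mu> = Inf S"
  have lower: "\<mu> * vec_sq_norm x \<le> Re (quad A x)" if x: "x \<in> carrier_vec n" for x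
  proof (cases "x = 0\<^sub>v n")
    case True
    then show ?thesis using psd[OF x] by simp
  next
    case False
    have "\<mu> \<le> Re (quad A x) / vec_sq_norm x"
      unfolding \<mu>_def using x False S_bdd by (intro cInf_lower) (auto simp: S_def)
    then show ?thesis using vec_sq_norm_pos[OF x False] by (simp add: pos_le_divide_eq)
  qed
  have "\<exists>x\<in>carrier_vec n. x \<noteq> 0\<^sub>v n \<and> Re (quad A x) < (\<mu> + \<epsilon>) * vec_sq_norm x"
    if "\<epsilon> > 0" for \<epsilon>
  proof -
    have "Inf S < \<mu> + \<epsilon>" unfolding \<mu>_def using that by simp
    then obtain x where "x \<in> carrier_vec n" "x \<noteq> 0\<^sub>v n"
      "Re (quad A x) / vec_sq_norm x < \<mu> + \<epsilon>"
      using cInf_less_iff[OF S_ne S_bdd] unfolding S_def by blast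
    then show ?thesis using vec_sq_norm_pos by (auto simp: divide_less_eq)
  qed
  then show ?thesis using that Rayleigh_inf_eigenvalue[OF A lower] lower by blast
qed

lemma lambda_min_le_eigenvalue:
  fixes A :: "complex mat"
  assumes A: "A \<in> carrier_mat n n" and ev: "eigenvalue A k"
  shows "lambda_min A \<le> Re k"
proof -
  have "char_poly A \<noteq> 0" using degree_monic_char_poly[OF A] by auto
  then have "finite {k. eigenvalue A k}"
    using poly_roots_finite eigenvalue_root_char_poly[OF A] by simp
  then show ?thesis unfolding lambda_min_def using ev by (intro Min_le) auto
qed

lemma hermitian_psd_lambda_min_le:
  fixes A :: "complex mat"
  assumes A: "A \<in> carrier_mat n n" "mat_adjoint A = A" and n: "n > 0"
    and psd: "\<And>x. x \<in> carrier_vec n \<Longrightarrow> 0 \<le> Re (quad A x)"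
    and y: "y \<in> carrier_vec n"
  shows "lambda_min A * vec_sq_norm y \<le> Re (quad A y)"
proof -
  obtain \<mu> where \<mu>: "eigenvalue A (complex_of_real \<mu>)"
    "\<And>x. x \<in> carrier_vec n \<Longrightarrow> \<mu> * vec_sq_norm x \<le> Re (quad A x)"
    using hermitian_psd_min_eigenvalue_exists[OF A n psd] by blast
  have "lambda_min A * vec_sq_norm y \<le> \<mu> * vec_sq_norm y"
    using lambda_min_le_eigenvalue[OF A(1) \<mu>(1)] vec_sq_norm_nonneg by (simp add: mult_right_mono)
  also have "\<dots> \<le> Re (quad A y)" by (rule \<mu>(2)[OF y])
  finally show ?thesis .
qed

lemma gram_hermitian:
  fixes U :: "complex mat"
  assumes U: "U \<in> carrier_mat n m"
  shows "mat_adjoint (U * mat_adjoint U) = U * mat_adjoint U"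
proof (rule hermitianI[of _ n])
  fix i j assume "i < n" "j < n"
  then show "(U * mat_adjoint U) $$ (i,j) = cnj ((U * mat_adjoint U) $$ (j,i))"
    using U by (simp add: scalar_prod_def cnj_sum mult.commute)
qed (use U in simp)

lemma quad_gram:
  fixes U :: "complex mat"
  assumes U: "U \<in> carrier_mat n m" and y: "y \<in> carrier_vec n"
  shows "quad (U * mat_adjoint U) y = of_real (vec_sq_norm (mat_adjoint U *\<^sub>v y))"
proof -
  have "quad (U * mat_adjoint U) y = (U *\<^sub>v (mat_adjoint U *\<^sub>v y)) \<bullet>c y"
    unfolding quad_def using U y by (subst assoc_mult_mat_vec[of _ n m _ n]) auto
  also have "\<dots> = (mat_adjoint U *\<^sub>v y) \<bullet>c (mat_adjoint U *\<^sub>v y)"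
    by (rule cscalar_prod_mat_adjoint[OF U mult_mat_vec_carrier[OF mat_adjoint_carrier[OF U] y] y])
  finally show ?thesis by (simp add: cscalar_prod_self)
qed

lemma lambda_min_gram_le:
  fixes U :: "complex mat"
  assumes U: "U \<in> carrier_mat n m" and n: "n > 0" and y: "y \<in> carrier_vec n"
  shows "lambda_min (U * mat_adjoint U) * vec_sq_norm y \<le> vec_sq_norm (mat_adjoint U *\<^sub>v y)"
proof -
  have "lambda_min (U * mat_adjoint U) * vec_sq_norm y \<le> Re (quad (U * mat_adjoint U) y)"
    using U y vec_sq_norm_nonneg quad_gram[OF U]
    by (intro hermitian_psd_lambda_min_le[OF _ gram_hermitian[OF U] n]) auto
  then show ?thesis using quad_gram[OF U y] by simp
qed

section \<open>Block vectors and the space--time signal model\<close>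

lemma sum_mult_blocks:
  fixes f :: "nat \<Rightarrow> 'a::comm_monoid_add"
  shows "(\<Sum>r<T * m. f r) = (\<Sum>t<T. \<Sum>i<m. f (t * m + i))"
proof -
  have shift: "sum f {a..<a + m} = (\<Sum>i<m. f (a + i))" for a
    using sum.shift_bounds_nat_ivl[of f 0 a m] by (simp add: add.commute atLeast0LessThan)
  show ?thesis using sum.nat_group[of f m T] by (simp add: shift)
qed

lemma block_index_less:
  assumes "t < T" "i < m"
  shows "t * m + i < T * (m :: nat)"
proof -
  have "t * m + i < Suc t * m" using assms(2) by simp
  also have "\<dots> \<le> T * m" using assms(1) by (intro mult_le_mono1) simp
  finally show ?thesis .
qed

definition vec_block :: "nat \<Rightarrow> complex vec \<Rightarrow> nat \<Rightarrow> complex vec" where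
  "vec_block m w t = vec m (\<lambda>i. w $ (t * m + i))"

lemma vec_block_carrier [simp]: "vec_block m w t \<in> carrier_vec m"
  and vec_block_dim [simp]: "dim_vec (vec_block m w t) = m"
  and vec_block_index [simp]: "i < m \<Longrightarrow> vec_block m w t $ i = w $ (t * m + i)"
  unfolding vec_block_def by simp_all

lemma cscalar_prod_blocks:
  assumes "v \<in> carrier_vec (T * m)" "w \<in> carrier_vec (T * m)"
  shows "v \<bullet>c w = (\<Sum>t<T. vec_block m v t \<bullet>c vec_block m w t)"
  using assms by (simp add: cscalar_prod_sum sum_mult_blocks)

lemma vec_sq_norm_blocks:
  "w \<in> carrier_vec (T * m) \<Longrightarrow> vec_sq_norm w = (\<Sum>t<T. vec_sq_norm (vec_block m w t))"
  unfolding vec_sq_norm_def by (simp add: sum_mult_blocks)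

lemma kron_dims [simp]:
  "dim_row (kron A B) = dim_row A * dim_row B" "dim_col (kron A B) = dim_col A * dim_col B"
  unfolding kron_def by auto

lemma vec_block_kron_one_mult_vec:
  fixes B :: "complex mat"
  assumes B: "B \<in> carrier_mat m k" and x: "x \<in> carrier_vec (T * k)" and t: "t < T"
  shows "vec_block m (kron (1\<^sub>m T) B *\<^sub>v x) t = B *\<^sub>v vec_block k x t"
proof (rule eq_vecI)
  fix i assume "i < dim_vec (B *\<^sub>v vec_block k x t)"
  then have i: "i < m" using B by simp
  have entry: "kron (1\<^sub>m T) B $$ (t * m + i, s * k + l) = (if t = s then B $$ (i,l) else 0)"
    if "s < T" "l < k" for s l
    using B that i t block_index_less[OF t i] block_index_less[of s T l k] by (simp add: kron_def)
  have "(kron (1\<^sub>m T) B *\<^sub>v x) $ (t * m + i)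
      = (\<Sum>s<T. \<Sum>l<k. kron (1\<^sub>m T) B $$ (t * m + i, s * k + l) * x $ (s * k + l))"
    using block_index_less[OF t i] B x
    by (simp add: mult_mat_vec_index_sum sum_mult_blocks del: index_mult_mat_vec)
  also have "\<dots> = (\<Sum>s<T. if t = s then (\<Sum>l<k. B $$ (i,l) * x $ (s * k + l)) else 0)"
    by (intro sum.cong refl) (simp add: entry)
  also have "\<dots> = (B *\<^sub>v vec_block k x t) $ i"
    using B i t by (simp add: mult_mat_vec_index_sum del: index_mult_mat_vec)
  finally show "vec_block m (kron (1\<^sub>m T) B *\<^sub>v x) t $ i = (B *\<^sub>v vec_block k x t) $ i"
    using i by simp
qed (use B in simp)

lemma mat_range_kron_one:
  fixes P :: "complex mat"
  assumes P: "P \<in> carrier_mat m m" and w: "w \<in> mat_range (kron (1\<^sub>m T) P)"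
  shows "w \<in> carrier_vec (T * m)" "\<And>t. t < T \<Longrightarrow> vec_block m w t \<in> mat_range P"
proof -
  obtain x where x: "x \<in> carrier_vec (T * m)" "w = kron (1\<^sub>m T) P *\<^sub>v x"
    using w P unfolding mat_range_def by auto
  show "w \<in> carrier_vec (T * m)" using x P unfolding carrier_vec_def by simp
  show "vec_block m w t \<in> mat_range P" if t: "t < T" for t
    unfolding x(2) vec_block_kron_one_mult_vec[OF P x(1) t] using P unfolding mat_range_def by auto
qed

lemma vec_stack_carrier: "U \<in> carrier_mat n T \<Longrightarrow> vec_stack U \<in> carrier_vec (T * n)"
  unfolding vec_stack_def by (simp add: mult.commute)

lemma vec_block_vec_stack:
  assumes "U \<in> carrier_mat n T" "t < T"
  shows "vec_block n (vec_stack U) t = col U t"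
  by (rule eq_vecI) (use assms block_index_less[of t T _ n] in \<open>auto simp: vec_stack_def mult.commute\<close>)

lemma vec_block_Gmat_mult_vec_stack:
  assumes g: "g \<in> carrier_vec m" and s: "s \<in> carrier_vec n" and U: "U \<in> carrier_mat n T"
    and t: "t < T"
  shows "vec_block m (Gmat T g s *\<^sub>v vec_stack U) t = (s \<bullet> col U t) \<cdot>\<^sub>v g"
proof -
  define M where "M = mat (dim_vec g) (dim_vec s) (\<lambda>(i, j). g $ i * s $ j)"
  have M: "M \<in> carrier_mat m n" unfolding M_def using g s by simp
  have "vec_block m (Gmat T g s *\<^sub>v vec_stack U) t = M *\<^sub>v col U t"
    unfolding Gmat_def M_def[symmetric]
    using vec_block_kron_one_mult_vec[OF M vec_stack_carrier[OF U] t] vec_block_vec_stack[OF U t]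
    by simp
  also have "\<dots> = (s \<bullet> col U t) \<cdot>\<^sub>v g"
    using M g s U t
    by (intro eq_vecI) (auto simp: M_def scalar_prod_def sum_distrib_left sum_distrib_right mult_ac)
  finally show ?thesis .
qed

lemma Gmat_mult_vec_stack_carrier:
  "g \<in> carrier_vec m \<Longrightarrow> s \<in> carrier_vec n \<Longrightarrow> U \<in> carrier_mat n T \<Longrightarrow>
    Gmat T g s *\<^sub>v vec_stack U \<in> carrier_vec (T * m)"
  unfolding Gmat_def carrier_vec_def by simp

lemma cscalar_prod_Gmat_mult_vec_stack:
  assumes g: "g \<in> carrier_vec m" and s: "s \<in> carrier_vec n" and U: "U \<in> carrier_mat n T"
    and w: "w \<in> carrier_vec (T * m)"
  shows "(Gmat T g s *\<^sub>v vec_stack U) \<bullet>c w = (\<Sum>t<T. (s \<bullet> col U t) * (g \<bullet>c vec_block m w t))"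
  unfolding cscalar_prod_blocks[OF Gmat_mult_vec_stack_carrier[OF g s U] w]
  using g by (intro sum.cong refl) (simp add: vec_block_Gmat_mult_vec_stack[OF g s U])

lemma mat_adjoint_mult_conjugate_index:
  assumes "U \<in> carrier_mat n T" "s \<in> carrier_vec n" "t < T"
  shows "(mat_adjoint U *\<^sub>v conjugate s) $ t = cnj (s \<bullet> col U t)"
  using assms by (simp add: mult_mat_vec_index_sum scalar_prod_def cnj_sum atLeast0LessThan
      mult.commute del: index_mult_mat_vec)

lemma vec_sq_norm_mat_adjoint_mult_conjugate:
  assumes "U \<in> carrier_mat n T" "s \<in> carrier_vec n"
  shows "vec_sq_norm (mat_adjoint U *\<^sub>v conjugate s) = (\<Sum>t<T. (cmod (s \<bullet> col U t))\<^sup>2)"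
  using assms unfolding vec_sq_norm_def
  by (simp add: mat_adjoint_mult_conjugate_index del: index_mult_mat_vec)

lemma sum_outer_bilinear:
  assumes "v \<in> carrier_vec N" "w \<in> carrier_vec N"
  shows "(\<Sum>i<N. \<Sum>j<N. (v $ i * cnj (v $ j)) * w $ j * cnj (w $ i)) = (v \<bullet>c w) * cnj (v \<bullet>c w)"
proof -
  have "(v \<bullet>c w) * cnj (v \<bullet>c w) = (\<Sum>i<N. v $ i * cnj (w $ i)) * (\<Sum>j<N. cnj (v $ j) * w $ j)"
    using assms by (simp add: cscalar_prod_sum cnj_sum)
  also have "\<dots> = (\<Sum>i<N. \<Sum>j<N. (v $ i * cnj (v $ j)) * w $ j * cnj (w $ i))"
    unfolding sum_product by (intro sum.cong refl) (simp add: mult_ac)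
  finally show ?thesis by simp
qed

lemma Re_quad_weighted_outer_sum:
  fixes c :: "nat \<Rightarrow> real" and v :: "nat \<Rightarrow> complex vec"
  assumes w: "w \<in> carrier_vec N" and v: "\<And>k. k \<in> K \<Longrightarrow> v k \<in> carrier_vec N"
  shows "Re (quad (mat N N (\<lambda>ij. \<Sum>k\<in>K. complex_of_real (c k) * outer (v k) $$ ij)) w)
    = (\<Sum>k\<in>K. c k * (cmod (v k \<bullet>c w))\<^sup>2)"
proof -
  let ?M = "mat N N (\<lambda>ij. \<Sum>k\<in>K. complex_of_real (c k) * outer (v k) $$ ij)"
  have dim_v: "\<And>k. k \<in> K \<Longrightarrow> dim_vec (v k) = N" using v by auto
  have outer_entry: "outer (v k) $$ (i,j) = v k $ i * cnj (v k $ j)"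
    if "k \<in> K" "i < N" "j < N" for k i j
    using that dim_v by (simp add: outer_def)
  have "quad ?M w = (\<Sum>i<N. \<Sum>j<N. \<Sum>k\<in>K.
      complex_of_real (c k) * ((v k $ i * cnj (v k $ j)) * w $ j * cnj (w $ i)))"
    unfolding quad_def cscalar_prod_mult_mat_vec_sum[OF _ w w, of ?M, simplified]
    by (intro sum.cong refl) (simp add: outer_entry sum_distrib_left mult_ac cong: sum.cong)
  also have "\<dots> = (\<Sum>k\<in>K. complex_of_real (c k) * ((v k \<bullet>c w) * cnj (v k \<bullet>c w)))"
    using v w by (simp add: sum.swap[of _ K] sum_distrib_left[symmetric] sum_outer_bilinear)
  finally show ?thesis by (simp add: Re_sum complex_norm_square[symmetric])
qed

lemma Lambda_ge_witness:
  fixes P X :: "complex mat"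
  assumes P: "P \<in> carrier_mat m m" and w: "w \<in> mat_range (kron (1\<^sub>m T) P)" "w \<noteq> 0\<^sub>v (T * m)"
    and bounded: "\<And>w. w \<in> carrier_vec (T * m) \<Longrightarrow> Re (quad X w) \<le> K * vec_sq_norm w"
  shows "Re (quad X w) / vec_sq_norm w \<le> Lambda T P X"
proof -
  let ?S = "{Re (quad X w) / Re (w \<bullet>c w) | w.
      w \<in> mat_range (kron (1\<^sub>m T) P) \<and> w \<noteq> 0\<^sub>v (T * dim_row P)}"
  have S: "?S = {Re (quad X w) / vec_sq_norm w | w.
      w \<in> mat_range (kron (1\<^sub>m T) P) \<and> w \<noteq> 0\<^sub>v (T * m)}"
    using P by (simp add: cscalar_prod_self)
  have "bdd_above ?S" unfolding S
  proof (rule bdd_aboveI[of _ K], clarify)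
    fix v assume v: "v \<in> mat_range (kron (1\<^sub>m T) P)" "v \<noteq> 0\<^sub>v (T * m)"
    have vc: "v \<in> carrier_vec (T * m)" by (rule mat_range_kron_one(1)[OF P v(1)])
    show "Re (quad X v) / vec_sq_norm v \<le> K"
      using bounded[OF vc] vec_sq_norm_pos[OF vc v(2)] by (simp add: divide_le_eq)
  qed
  moreover have "Re (quad X w) / vec_sq_norm w \<in> ?S" unfolding S using w by blast
  ultimately show ?thesis unfolding Lambda_def by (rule cSup_upper[rotated])
qed

lemma Lambda_eq_0:
  fixes P X :: "complex mat"
  assumes P: "P \<in> carrier_mat m m" "P \<noteq> 0\<^sub>m m m" and T: "T > 0"
    and vanish: "\<And>w. w \<in> mat_range (kron (1\<^sub>m T) P) \<Longrightarrow> Re (quad X w) = 0"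
  shows "Lambda T P X = 0"
proof -
  obtain i j where ij: "i < m" "j < m" "P $$ (i,j) \<noteq> 0"
    using P by (metis carrier_matD eq_matI index_zero_mat)
  have jT: "j < T * m" using block_index_less[OF T ij(2)] by simp
  define x :: "complex vec" where "x = unit_vec (T * m) j"
  have x: "x \<in> carrier_vec (T * m)" unfolding x_def by simp
  have "vec_block m x 0 = unit_vec m j"
    using block_index_less[OF T] ij(2) unfolding x_def by (intro eq_vecI) auto
  define w where "w = kron (1\<^sub>m T) P *\<^sub>v x"
  have wr: "w \<in> mat_range (kron (1\<^sub>m T) P)" unfolding w_def mat_range_def using x P by auto
  have "vec_block m w 0 $ i = P $$ (i,j)"
    unfolding w_def vec_block_kron_one_mult_vec[OF P(1) x T] \<open>vec_block m x 0 = unit_vec m j\<close>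
    by (rule mult_mat_unit_vec_index[OF P(1) ij(1,2)])
  then have "w \<noteq> 0\<^sub>v (T * m)" using ij block_index_less[OF T ij(1)] by auto
  then have "{Re (quad X w) / Re (w \<bullet>c w) | w.
      w \<in> mat_range (kron (1\<^sub>m T) P) \<and> w \<noteq> 0\<^sub>v (T * dim_row P)} = {0}"
    using vanish wr P by auto
  then show ?thesis unfolding Lambda_def by simp
qed

lemma quad_orth_proj:
  assumes P: "is_orth_proj n P V" and g: "g \<in> carrier_vec n"
  shows "quad P g = of_real (vec_sq_norm (P *\<^sub>v g))"
    and "g \<bullet>c (P *\<^sub>v g) = of_real (vec_sq_norm (P *\<^sub>v g))"
proof -
  note Pc = is_orth_projD[OF P]
  have Pg: "P *\<^sub>v g \<in> carrier_vec n" using Pc(1) g by simp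
  have "quad P g = (P *\<^sub>v (P *\<^sub>v g)) \<bullet>c g"
    unfolding quad_def using assoc_mult_mat_vec[OF Pc(1) Pc(1) g] Pc(2) by simp
  also have "\<dots> = (P *\<^sub>v g) \<bullet>c (P *\<^sub>v g)" by (rule cscalar_prod_hermitian[OF Pc(1,3) Pg g])
  finally show quad: "quad P g = of_real (vec_sq_norm (P *\<^sub>v g))" by (simp add: cscalar_prod_self)
  show "g \<bullet>c (P *\<^sub>v g) = of_real (vec_sq_norm (P *\<^sub>v g))"
    using cscalar_prod_swap[of "P *\<^sub>v g" g] quad Pg g Pc(1) unfolding quad_def by simp
qed

text \<open>The witness for the lower bounds on \<open>Lambda\<close>: the path signal filtered by
  \<open>kron (1\<^sub>m T) P\<close>.\<close>

lemma projected_path_signal: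
  assumes P: "is_orth_proj m P V" and g: "g \<in> carrier_vec m" and s: "s \<in> carrier_vec n"
    and U: "U \<in> carrier_mat n T"
  defines "x \<equiv> Gmat T g s *\<^sub>v vec_stack U"
  defines "w \<equiv> kron (1\<^sub>m T) P *\<^sub>v x"
  shows "w \<in> mat_range (kron (1\<^sub>m T) P)"
    and "vec_sq_norm w = Re (quad P g) * vec_sq_norm (mat_adjoint U *\<^sub>v conjugate s)"
    and "x \<bullet>c w = of_real (vec_sq_norm w)"
proof -
  note Pc = is_orth_projD[OF P]
  have x: "x \<in> carrier_vec (T * m)" unfolding x_def by (rule Gmat_mult_vec_stack_carrier[OF g s U])
  show "w \<in> mat_range (kron (1\<^sub>m T) P)" unfolding w_def mat_range_def using x Pc(1) by auto
  then have w: "w \<in> carrier_vec (T * m)" by (rule mat_range_kron_one(1)[OF Pc(1)])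
  have block: "vec_block m w t = (s \<bullet> col U t) \<cdot>\<^sub>v (P *\<^sub>v g)" if t: "t < T" for t
    unfolding w_def x_def vec_block_kron_one_mult_vec[OF Pc(1) x[unfolded x_def] t]
      vec_block_Gmat_mult_vec_stack[OF g s U t]
    using mult_mat_vec[OF Pc(1) g] by simp
  show norm: "vec_sq_norm w = Re (quad P g) * vec_sq_norm (mat_adjoint U *\<^sub>v conjugate s)"
    unfolding vec_sq_norm_blocks[OF w] vec_sq_norm_mat_adjoint_mult_conjugate[OF U s]
      quad_orth_proj(1)[OF P g] sum_distrib_left
    by (intro sum.cong refl) (simp add: block vec_sq_norm_smult)
  have inner: "g \<bullet>c (a \<cdot>\<^sub>v (P *\<^sub>v g)) = cnj a * of_real (vec_sq_norm (P *\<^sub>v g))" for a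
    using quad_orth_proj(2)[OF P g] g Pc(1) by (simp add: conjugate_smult_vec)
  have "x \<bullet>c w = (\<Sum>t<T. (s \<bullet> col U t) * (cnj (s \<bullet> col U t) * of_real (vec_sq_norm (P *\<^sub>v g))))"
    unfolding x_def cscalar_prod_Gmat_mult_vec_stack[OF g s U w] by (simp add: block inner)
  also have "\<dots> = (\<Sum>t<T. of_real ((cmod (s \<bullet> col U t))\<^sup>2 * vec_sq_norm (P *\<^sub>v g)))"
    by (simp only: mult.assoc[symmetric] of_real_mult flip: complex_norm_square)
  finally show "x \<bullet>c w = of_real (vec_sq_norm w)"
    unfolding norm vec_sq_norm_mat_adjoint_mult_conjugate[OF U s] quad_orth_proj(1)[OF P g]
    by (simp add: sum_distrib_left mult.commute)
qed

lemma Lambda_ge_path_weight: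
  fixes P X U :: "complex mat"
  assumes P: "is_orth_proj m P V" and g: "g \<in> carrier_vec m"
    and s: "s \<in> carrier_vec n" "\<forall>i<n. cmod (s $ i) = 1" and U: "U \<in> carrier_mat n T"
    and n: "n > 0" and c: "c > 0"
    and lower: "\<And>w. w \<in> carrier_vec (T * m) \<Longrightarrow>
      c * (cmod ((Gmat T g s *\<^sub>v vec_stack U) \<bullet>c w))\<^sup>2 \<le> Re (quad X w)"
    and bounded: "\<And>w. w \<in> carrier_vec (T * m) \<Longrightarrow> Re (quad X w) \<le> K * vec_sq_norm w"
    and gain: "Re (quad P g) > 0"
    and snr: "\<rho> \<le> c * Re (quad P g) * lambda_min (U * mat_adjoint U) * real n" and \<rho>: "\<rho> > 0"
  shows "\<rho> \<le> Lambda T P X"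
proof -
  define w where "w = kron (1\<^sub>m T) P *\<^sub>v (Gmat T g s *\<^sub>v vec_stack U)"
  note w_props = projected_path_signal[OF P g s(1) U, folded w_def]
  have wc: "w \<in> carrier_vec (T * m)" by (rule mat_range_kron_one(1)[OF is_orth_projD(1)[OF P] w_props(1)])
  let ?S = "vec_sq_norm (mat_adjoint U *\<^sub>v conjugate s)"
  have S: "lambda_min (U * mat_adjoint U) * real n \<le> ?S"
    using lambda_min_gram_le[OF U n carrier_vec_conjugate[OF s(1)]]
      vec_sq_norm_conjugate_unimodular[OF s] by simp
  have cg: "c * Re (quad P g) > 0" using c gain by simp
  have "0 < c * Re (quad P g) * (lambda_min (U * mat_adjoint U) * real n)"
    using snr \<rho> by (simp only: mult.assoc)
  then have "lambda_min (U * mat_adjoint U) * real n > 0"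
    using cg by (rule zero_less_mult_pos)
  then have "?S > 0" using S by linarith
  then have norm_pos: "vec_sq_norm w > 0" unfolding w_props(2) using gain by simp
  have w0: "w \<noteq> 0\<^sub>v (T * m)" using norm_pos by auto
  have cmod_w: "cmod ((Gmat T g s *\<^sub>v vec_stack U) \<bullet>c w) = vec_sq_norm w"
    using w_props(3) vec_sq_norm_nonneg[of w] by simp
  have "\<rho> \<le> c * Re (quad P g) * (lambda_min (U * mat_adjoint U) * real n)"
    using snr by (simp only: mult.assoc)
  also have "\<dots> \<le> c * Re (quad P g) * ?S"
    using mult_left_mono[OF S] cg by simp
  also have "\<dots> = c * (vec_sq_norm w)\<^sup>2 / vec_sq_norm w"
    using norm_pos unfolding w_props(2) by (simp add: power2_eq_square)
  also have "\<dots> \<le> Re (quad X w) / vec_sq_norm w"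
    using lower[OF wc] norm_pos unfolding cmod_w by (intro divide_right_mono) auto
  also have "\<dots> \<le> Lambda T P X"
    by (rule Lambda_ge_witness[OF is_orth_projD(1)[OF P] w_props(1) w0 bounded])
  finally show ?thesis .
qed

section \<open>The multipath channel\<close>

locale multipath_channel =
  fixes T Nt Nm Q :: nat and g s :: "nat \<Rightarrow> complex vec" and U :: "complex mat"
    and b0 sigmaz2 :: real and sigma2 :: "nat \<Rightarrow> real"
  assumes T_pos: "T > 0" and Nt_pos: "Nt > 0"
    and g: "\<And>q. q \<le> Q \<Longrightarrow> g q \<in> carrier_vec Nm"
    and s: "\<And>q. q \<le> Q \<Longrightarrow> s q \<in> carrier_vec Nt \<and> (\<forall>i<Nt. cmod (s q $ i) = 1)"
    and U: "U \<in> carrier_mat Nt T"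
    and b0: "b0 \<ge> 0" and sigma2: "\<And>q. 1 \<le> q \<Longrightarrow> q \<le> Q \<Longrightarrow> sigma2 q > 0"
    and sigmaz2: "sigmaz2 > 0"
begin

abbreviation path :: "nat \<Rightarrow> complex vec" where
  "path q \<equiv> Gmat T (g q) (s q) *\<^sub>v vec_stack U"

definition path_weight :: "nat \<Rightarrow> real" where
  "path_weight q = (if q = 0 then b0 else sigma2 q) / sigmaz2"

abbreviation \<Xi> :: "complex mat" where
  "\<Xi> \<equiv> Xi T Q g s U b0 sigma2 sigmaz2"

lemma path_carrier: "q \<le> Q \<Longrightarrow> path q \<in> carrier_vec (T * Nm)"
  using g s U by (intro Gmat_mult_vec_stack_carrier) auto

lemma path_weight_nonneg: "q \<le> Q \<Longrightarrow> path_weight q \<ge> 0"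
  using b0 sigma2[of q] sigmaz2 unfolding path_weight_def by (cases "q = 0") auto

lemma Xi_eq_weighted_outer_sum:
  "\<Xi> = mat (T * Nm) (T * Nm)
     (\<lambda>ij. \<Sum>q\<in>{0..Q}. complex_of_real (path_weight q) * outer (path q) $$ ij)"
proof -
  have "dim_vec (g 0) = Nm" using g[of 0] by simp
  moreover have "(\<Sum>q\<in>{1..Q}. complex_of_real (path_weight q) * outer (path q) $$ ij)
      = (\<Sum>q\<in>{1..Q}. complex_of_real (sigma2 q / sigmaz2) * outer (path q) $$ ij)" for ij
    by (intro sum.cong refl) (simp add: path_weight_def)
  ultimately show ?thesis
    unfolding Xi_def Let_def by (simp add: sum.atLeast_Suc_atMost path_weight_def)
qed

lemma Re_quad_Xi:
  "w \<in> carrier_vec (T * Nm) \<Longrightarrow>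
    Re (quad \<Xi> w) = (\<Sum>q\<in>{0..Q}. path_weight q * (cmod (path q \<bullet>c w))\<^sup>2)"
  unfolding Xi_eq_weighted_outer_sum using path_carrier by (intro Re_quad_weighted_outer_sum) auto

lemma path_weight_le_Re_quad_Xi:
  assumes "q \<le> Q" "w \<in> carrier_vec (T * Nm)"
  shows "path_weight q * (cmod (path q \<bullet>c w))\<^sup>2 \<le> Re (quad \<Xi> w)"
  unfolding Re_quad_Xi[OF assms(2)] using assms(1) path_weight_nonneg
  by (intro member_le_sum) auto

lemma Re_quad_Xi_le:
  assumes w: "w \<in> carrier_vec (T * Nm)"
  shows "Re (quad \<Xi> w) \<le> (\<Sum>q\<in>{0..Q}. path_weight q * vec_sq_norm (path q)) * vec_sq_norm w"
  unfolding Re_quad_Xi[OF w] sum_distrib_right mult.assoc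
proof (intro sum_mono mult_left_mono)
  fix q assume q: "q \<in> {0..Q}"
  show "(cmod (path q \<bullet>c w))\<^sup>2 \<le> vec_sq_norm (path q) * vec_sq_norm w"
    using q path_carrier[of q] w by (intro cscalar_prod_Cauchy_Schwarz) (metis atLeastAtMost_iff carrier_vecD)
  show "0 \<le> path_weight q" using q path_weight_nonneg by auto
qed

lemma Pi_d_orth_proj: "is_orth_proj Nm (Pi_d Nm Q g) (orth_compl Nm (g ` {1..Q}))"
  unfolding Pi_d_def using g by (intro is_orth_proj_orth_proj) auto

lemma Pi_i_orth_proj:
  "is_orth_proj Nm (Pi_i Nm b0 g) (if b0 > 0 then orth_compl Nm {g 0} else carrier_vec Nm)"
  unfolding Pi_i_def using is_orth_proj_orth_proj[of "{g 0}" Nm] g[of 0] is_orth_proj_one by auto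

lemma path_orth_kron_range:
  assumes P: "is_orth_proj Nm P V" and q: "q \<le> Q" and orth: "\<And>y. y \<in> V \<Longrightarrow> y \<bullet>c g q = 0"
    and w: "w \<in> mat_range (kron (1\<^sub>m T) P)"
  shows "path q \<bullet>c w = 0"
proof -
  have Pc: "P \<in> carrier_mat Nm Nm" by (rule is_orth_projD(1)[OF P])
  have "g q \<bullet>c vec_block Nm w t = 0" if "t < T" for t
    using mat_range_kron_one(2)[OF Pc w that] orth g[OF q]
      cscalar_prod_swap[of "vec_block Nm w t" "g q"] is_orth_projD(4)[OF P] by simp
  then show ?thesis
    using cscalar_prod_Gmat_mult_vec_stack[OF g[OF q] conjunct1[OF s[OF q]] U
        mat_range_kron_one(1)[OF Pc w]] by simp
qed

lemma path_orth_if_silent: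
  assumes q: "q \<le> Q" and silent: "mat_adjoint U *\<^sub>v conjugate (s q) = 0\<^sub>v T"
    and w: "w \<in> carrier_vec (T * Nm)"
  shows "path q \<bullet>c w = 0"
proof -
  have "s q \<bullet> col U t = 0" if "t < T" for t
    using mat_adjoint_mult_conjugate_index[OF U _ that, of "s q"] s[OF q] silent that by simp
  then show ?thesis
    using cscalar_prod_Gmat_mult_vec_stack[OF g[OF q] conjunct1[OF s[OF q]] U w] by simp
qed

lemma Lambda_Xi_eq_0:
  assumes P: "P \<in> carrier_mat Nm Nm" "P \<noteq> 0\<^sub>m Nm Nm"
    and vanish: "\<And>q w. q \<le> Q \<Longrightarrow> w \<in> mat_range (kron (1\<^sub>m T) P) \<Longrightarrow>
      path_weight q = 0 \<or> path q \<bullet>c w = 0"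
  shows "Lambda T P \<Xi> = 0"
proof (rule Lambda_eq_0[OF P T_pos])
  fix w assume w: "w \<in> mat_range (kron (1\<^sub>m T) P)"
  then show "Re (quad \<Xi> w) = 0"
    unfolding Re_quad_Xi[OF mat_range_kron_one(1)[OF P(1) w]] using vanish
    by (intro sum.neutral) force
qed

lemma threshold_imp_snr_bound:
  assumes pos: "a * \<gamma> > 0" and L: "L \<ge> (\<rho> * sigmaz2 / real Nt) / (a * \<gamma>)"
  shows "\<rho> \<le> a / sigmaz2 * \<gamma> * L * real Nt"
proof -
  have "\<rho> * sigmaz2 / real Nt \<le> L * (a * \<gamma>)" using L by (simp only: pos_divide_le_eq[OF pos])
  then have "\<rho> \<le> L * (a * \<gamma>) * real Nt / sigmaz2"
    using Nt_pos sigmaz2 by (simp add: divide_le_eq le_divide_eq mult.commute)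
  then show ?thesis by (simp add: field_simps)
qed

lemma direct_path_excited:
  assumes P: "Pi_d Nm Q g \<noteq> 0\<^sub>m Nm Nm" and \<rho>: "\<rho> > 0" "\<rho> \<le> Lambda T (Pi_d Nm Q g) \<Xi>"
  shows "mat_adjoint U *\<^sub>v conjugate (s 0) \<noteq> 0\<^sub>v T"
proof
  assume silent: "mat_adjoint U *\<^sub>v conjugate (s 0) = 0\<^sub>v T"
  have "Lambda T (Pi_d Nm Q g) \<Xi> = 0"
  proof (rule Lambda_Xi_eq_0[OF is_orth_projD(1)[OF Pi_d_orth_proj] P])
    fix q w assume q: "q \<le> Q" and w: "w \<in> mat_range (kron (1\<^sub>m T) (Pi_d Nm Q g))"
    show "path_weight q = 0 \<or> path q \<bullet>c w = 0"
    proof (cases "q = 0")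
      case True
      then show ?thesis using path_orth_if_silent[OF q _ mat_range_kron_one(1)[OF
          is_orth_projD(1)[OF Pi_d_orth_proj] w]] silent by simp
    next
      case False
      then show ?thesis using q
        by (intro disjI2 path_orth_kron_range[OF Pi_d_orth_proj q _ w]) (auto simp: orth_compl_def)
    qed
  qed
  then show False using \<rho> by simp
qed

lemma indirect_path_excited:
  assumes P: "Pi_i Nm b0 g \<noteq> 0\<^sub>m Nm Nm" and \<rho>: "\<rho> > 0" "\<rho> \<le> Lambda T (Pi_i Nm b0 g) \<Xi>"
  shows "\<exists>q\<in>{1..Q}. mat_adjoint U *\<^sub>v conjugate (s q) \<noteq> 0\<^sub>v T"
proof (rule ccontr)
  assume "\<not> ?thesis"
  then have silent: "mat_adjoint U *\<^sub>v conjugate (s q) = 0\<^sub>v T" if "q \<in> {1..Q}" for q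
    using that by blast
  have "Lambda T (Pi_i Nm b0 g) \<Xi> = 0"
  proof (rule Lambda_Xi_eq_0[OF is_orth_projD(1)[OF Pi_i_orth_proj] P])
    fix q w assume q: "q \<le> Q" and w: "w \<in> mat_range (kron (1\<^sub>m T) (Pi_i Nm b0 g))"
    show "path_weight q = 0 \<or> path q \<bullet>c w = 0"
    proof (cases "q = 0")
      case True
      show ?thesis
      proof (cases "b0 > 0")
        case True
        then show ?thesis using \<open>q = 0\<close>
          by (intro disjI2 path_orth_kron_range[OF Pi_i_orth_proj q _ w]) (auto simp: orth_compl_def)
      qed (unfold path_weight_def, use \<open>q = 0\<close> b0 in simp)
    next
      case False
      then show ?thesis using q silent path_orth_if_silent[OF q _ mat_range_kron_one(1)[OF
          is_orth_projD(1)[OF Pi_i_orth_proj] w]] by simp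
    qed
  qed
  then show False using \<rho> by simp
qed

lemma Lambda_Pi_d_ge:
  assumes b0_pos: "b0 > 0" and gain: "Re (quad (Pi_d Nm Q g) (g 0)) > 0" and \<rho>: "\<rho> > 0"
    and threshold: "lambda_min (U * mat_adjoint U) \<ge>
      (\<rho> * sigmaz2 / real Nt) / (b0 * Re (quad (Pi_d Nm Q g) (g 0)))"
  shows "\<rho> \<le> Lambda T (Pi_d Nm Q g) \<Xi>"
proof (rule Lambda_ge_path_weight[OF Pi_d_orth_proj g[of 0] _ _ U Nt_pos _
      path_weight_le_Re_quad_Xi[of 0] Re_quad_Xi_le gain _ \<rho>])
  show "path_weight 0 > 0" using b0_pos sigmaz2 by (simp add: path_weight_def)
  have weight: "path_weight 0 = b0 / sigmaz2" by (simp add: path_weight_def)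
  have "b0 * Re (quad (Pi_d Nm Q g) (g 0)) > 0" using b0_pos gain by simp
  from threshold_imp_snr_bound[OF this threshold]
  show "\<rho> \<le> path_weight 0 * Re (quad (Pi_d Nm Q g) (g 0)) * lambda_min (U * mat_adjoint U) * real Nt"
    unfolding weight .
qed (use s[of 0] in auto)

lemma Lambda_Pi_i_ge:
  defines "gain \<equiv> \<lambda>q. sigma2 q * Re (quad (Pi_i Nm b0 g) (g q))"
  assumes Q: "Q \<ge> 1" and max_pos: "Max (gain ` {1..Q}) > 0" and \<rho>: "\<rho> > 0"
    and threshold: "lambda_min (U * mat_adjoint U) \<ge> (\<rho> * sigmaz2 / real Nt) / Max (gain ` {1..Q})"
  shows "\<rho> \<le> Lambda T (Pi_i Nm b0 g) \<Xi>"
proof -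
  have "Max (gain ` {1..Q}) \<in> gain ` {1..Q}" by (rule Max_in) (use Q in auto)
  then obtain q where q: "q \<in> {1..Q}" "gain q = Max (gain ` {1..Q})" by auto
  have q_le: "q \<le> Q" and q_ne: "q \<noteq> 0" using q(1) by auto
  have "gain q > 0" using max_pos unfolding q(2)[symmetric] .
  then have q_pos: "sigma2 q * Re (quad (Pi_i Nm b0 g) (g q)) > 0" by (simp add: gain_def)
  have "sigma2 q > 0" using sigma2[of q] q_le q_ne by simp
  with q_pos have q_gain: "Re (quad (Pi_i Nm b0 g) (g q)) > 0" by (rule zero_less_mult_pos)
  show ?thesis
  proof (rule Lambda_ge_path_weight[OF Pi_i_orth_proj g[OF q_le] _ _ U Nt_pos _
        path_weight_le_Re_quad_Xi[OF q_le] Re_quad_Xi_le q_gain _ \<rho>])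
    show "path_weight q > 0" using q_le q_ne sigma2[of q] sigmaz2 by (simp add: path_weight_def)
    have weight: "path_weight q = sigma2 q / sigmaz2" using q_ne by (simp add: path_weight_def)
    have "lambda_min (U * mat_adjoint U) \<ge>
        (\<rho> * sigmaz2 / real Nt) / (sigma2 q * Re (quad (Pi_i Nm b0 g) (g q)))"
      using threshold unfolding q(2)[symmetric] by (simp add: gain_def)
    then show "\<rho> \<le> path_weight q * Re (quad (Pi_i Nm b0 g) (g q)) * lambda_min (U * mat_adjoint U) * real Nt"
      unfolding weight by (rule threshold_imp_snr_bound[OF q_pos])
  qed (use s[OF q_le] in auto)
qed

end

theorem proposition5:
  fixes T Nt Nm Q :: nat
    and g s :: "nat \<Rightarrow> complex vec"
    and U :: "complex mat"
    and b0 sigmaz2 rho :: real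
    and sigma2 :: "nat \<Rightarrow> real"
  assumes "T \<ge> 1" "Nt \<ge> 1" "Nm \<ge> 1"
    and g: "\<And>q. q \<le> Q \<Longrightarrow> g q \<in> carrier_vec Nm \<and> (\<forall>i<Nm. cmod (g q $ i) = 1)"
    and s: "\<And>q. q \<le> Q \<Longrightarrow> s q \<in> carrier_vec Nt \<and> (\<forall>i<Nt. cmod (s q $ i) = 1)"
    and U: "U \<in> carrier_mat Nt T"
    and "b0 \<ge> 0"
    and "\<And>q. 1 \<le> q \<Longrightarrow> q \<le> Q \<Longrightarrow> sigma2 q > 0"
    and "sigmaz2 > 0"
    and "rho > 0"
  defines "X \<equiv> Xi T Q g s U b0 sigma2 sigmaz2"
    and "Pd \<equiv> Pi_d Nm Q g"
    and "Pii \<equiv> Pi_i Nm b0 g"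
  shows
    "(Pd \<noteq> 0\<^sub>m Nm Nm \<and> Lambda T Pd X \<ge> rho \<longrightarrow> mat_adjoint U *\<^sub>v conjugate (s 0) \<noteq> 0\<^sub>v T)
   \<and> (Pii \<noteq> 0\<^sub>m Nm Nm \<and> Lambda T Pii X \<ge> rho \<longrightarrow>
        (\<exists>q\<in>{1..Q}. mat_adjoint U *\<^sub>v conjugate (s q) \<noteq> 0\<^sub>v T))
   \<and> (vec_space.rank Nt U = Nt \<and> b0 > 0 \<and> Re (quad Pd (g 0)) > 0 \<and>
        lambda_min (U * mat_adjoint U) \<ge> (rho * sigmaz2 / real Nt) / (b0 * Re (quad Pd (g 0)))
        \<longrightarrow> Lambda T Pd X \<ge> rho)
   \<and> (vec_space.rank Nt U = Nt \<and> Q \<ge> 1 \<and>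
        Max ((\<lambda>q. sigma2 q * Re (quad Pii (g q))) ` {1..Q}) > 0 \<and>
        lambda_min (U * mat_adjoint U) \<ge>
          (rho * sigmaz2 / real Nt) / Max ((\<lambda>q. sigma2 q * Re (quad Pii (g q))) ` {1..Q})
        \<longrightarrow> Lambda T Pii X \<ge> rho)"
proof -
  interpret multipath_channel T Nt Nm Q g s U b0 sigmaz2 sigma2
    using assms(1-9) by unfold_locales auto
  show ?thesis
    unfolding X_def Pd_def Pii_def
    using direct_path_excited[OF _ \<open>rho > 0\<close>] indirect_path_excited[OF _ \<open>rho > 0\<close>]
      Lambda_Pi_d_ge[OF _ _ \<open>rho > 0\<close>] Lambda_Pi_i_ge[OF _ _ \<open>rho > 0\<close>]
    by (intro conjI impI; elim conjE) simp_all
qed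

end
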